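(* Let $\langle V, Q\rangle$ be a Federated Byzantine Agreement System with quorum slice cardinality map $C$. If $C(v) > |V|/2$ for every $v \in V$, then $\langle V, Q\rangle$ enjoys quorum intersection, i.e. any two quorums $U_1, U_2$ satisfy $U_1\cap U_2\neq\varnothing$.
   Context: An FBAS is a pair $\langle V, Q\rangle$ where $V$ is a finite set of nodes and $Q : V \to 2^{2^V}\setminus\{\varnothing\}$ assigns to each node a nonempty collection of subsets of $V$ (its quorum slices), such that for all $v\in V$ and all $q\in Q(v)$, $v \in q$. A set $U \subseteq V$ is a quorum iff $U\neq\varnothing$ and for every $u\in U$ there exists $q \in Q(u)$ with $q\subseteq U$. The FBAS enjoys quorum intersection iff every two quorums share a node. The quorum slice cardinality map is $C(v)=\min\{|q| : q\in Q(v)\}$. *)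

theory Defs
  imports Main
begin

definition fbas :: "'a set \<Rightarrow> ('a \<Rightarrow> 'a set set) \<Rightarrow> bool" where
  "fbas V Q \<longleftrightarrow> finite V \<and>
     (\<forall>v\<in>V. Q v \<noteq> {} \<and> Q v \<subseteq> Pow V \<and> (\<forall>q\<in>Q v. v \<in> q))"

definition is_quorum :: "'a set \<Rightarrow> ('a \<Rightarrow> 'a set set) \<Rightarrow> 'a set \<Rightarrow> bool" where
  "is_quorum V Q U \<longleftrightarrow> U \<subseteq> V \<and> U \<noteq> {} \<and> (\<forall>u\<in>U. \<exists>q\<in>Q u. q \<subseteq> U)"

definition quorum_intersection :: "'a set \<Rightarrow> ('a \<Rightarrow> 'a set set) \<Rightarrow> bool" where
  "quorum_intersection V Q \<longleftrightarrow>
     (\<forall>U1 U2. is_quorum V Q U1 \<and> is_quorum V Q U2 \<longrightarrow> U1 \<inter> U2 \<noteq> {})"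

definition slice_card :: "('a \<Rightarrow> 'a set set) \<Rightarrow> 'a \<Rightarrow> nat" where
  "slice_card Q v = Min (card ` Q v)"

end

theory Submission
  imports Defs
begin

text \<open>Every quorum contains a whole slice of each of its members, so it is at least as large
as the smallest slice of any member. If every smallest slice is a strict majority of V, every
quorum is a strict majority of V, and two strict majorities of a finite set must meet.\<close>

lemma majorities_intersect:
  assumes "finite V" "A \<subseteq> V" "B \<subseteq> V" "card V < 2 * card A" "card V < 2 * card B"
  shows "A \<inter> B \<noteq> {}"
proof
  assume disjoint: "A \<inter> B = {}"
  have "card A + card B = card (A \<union> B)"
    using assms(1-3) disjoint by (simp add: card_Un_disjoint finite_subset)
  also have "\<dots> \<le> card V"
    using assms(1-3) by (simp add: card_mono)
  finally show False
    using assms(4,5) by linarith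
qed

lemma slice_card_le_card:
  assumes "fbas V Q" "v \<in> V" "q \<in> Q v"
  shows "slice_card Q v \<le> card q"
proof -
  have "finite (Q v)"
    using assms(1,2) unfolding fbas_def by (meson finite_Pow_iff finite_subset)
  then show ?thesis
    unfolding slice_card_def using assms(3) by simp
qed

lemma slice_card_le_card_quorum:
  assumes fbas: "fbas V Q" and quorum: "is_quorum V Q U" and "u \<in> U"
  shows "slice_card Q u \<le> card U"
proof -
  from quorum \<open>u \<in> U\<close> obtain q where q: "q \<in> Q u" "q \<subseteq> U" and "u \<in> V" "U \<subseteq> V"
    unfolding is_quorum_def by blast
  have "finite U"
    using fbas \<open>U \<subseteq> V\<close> unfolding fbas_def by (auto intro: finite_subset)
  have "slice_card Q u \<le> card q"
    using slice_card_le_card[OF fbas \<open>u \<in> V\<close> q(1)] .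
  also have "\<dots> \<le> card U"
    using q(2) \<open>finite U\<close> by (rule card_mono[rotated])
  finally show ?thesis .
qed

lemma quorum_is_majority:
  assumes fbas: "fbas V Q" and majority: "\<forall>v\<in>V. 2 * slice_card Q v > card V"
    and quorum: "is_quorum V Q U"
  shows "card V < 2 * card U"
proof -
  from quorum obtain u where "u \<in> U" "u \<in> V"
    unfolding is_quorum_def by blast
  then show ?thesis
    using majority slice_card_le_card_quorum[OF fbas quorum] by fastforce
qed

theorem mainTheorem2:
  fixes V :: "'a set" and Q :: "'a \<Rightarrow> 'a set set"
  assumes "fbas V Q"
    and "\<forall>v\<in>V. 2 * slice_card Q v > card V"
  shows "quorum_intersection V Q"
  unfolding quorum_intersection_def
proof (intro allI impI)
  fix U1 U2
  assume quorums: "is_quorum V Q U1 \<and> is_quorum V Q U2"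
  have "finite V" "U1 \<subseteq> V" "U2 \<subseteq> V"
    using assms(1) quorums unfolding fbas_def is_quorum_def by auto
  moreover have "card V < 2 * card U1" "card V < 2 * card U2"
    using quorum_is_majority[OF assms] quorums by auto
  ultimately show "U1 \<inter> U2 \<noteq> {}"
    by (rule majorities_intersect)
qed

end
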